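(* Let $H\subset Y$ be closed. Then $\mathcal R_n^f(H,Z)$ is a $G_\delta$-subset of $C(X,M)$ (with the source limitation topology) in each of the following cases: (i) $Z\subset M$ is closed and $X,Y$ are metric spaces; (ii) $Z=M$ and $X,Y$ are paracompact.
   Context: Let $(M,\rho)$ be a complete metric space, $Z\subset M$ closed, $n\ge0$, and $f\colon X\to Y$ a perfect surjection between paracompact spaces with $\dim f\le n$. For $H\subset Y$, $\mathcal R_n^f(H,Z)=\{g\in C(X,M):\dim\big(g(f^{-1}(y))\cap Z\big)\le n\ \forall y\in H\}$. The source limitation topology on $C(X,M)$ has as neighborhood base at $f$ the sets $\{g:\rho(g(x),f(x))<\varepsilon(x)\ \forall x\in X\}$, $\varepsilon\colon X\to(0,1]$ continuous. *)

theory Defs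
  imports "HOL-Analysis.Analysis" "HOL-Library.FuncSet"
begin

definition locally_finite_in :: "'a topology \<Rightarrow> 'a set set \<Rightarrow> bool" where
  "locally_finite_in X \<V> \<longleftrightarrow>
     (\<forall>x\<in>topspace X. \<exists>N. openin X N \<and> x \<in> N \<and> finite {V\<in>\<V>. V \<inter> N \<noteq> {}})"

definition paracompact_space :: "'a topology \<Rightarrow> bool" where
  "paracompact_space X \<longleftrightarrow> Hausdorff_space X \<and>
     (\<forall>\<U>. (\<forall>U\<in>\<U>. openin X U) \<and> \<Union>\<U> = topspace X \<longrightarrow>
        (\<exists>\<V>. (\<forall>V\<in>\<V>. openin X V) \<and> \<Union>\<V> = topspace X \<and>
              (\<forall>V\<in>\<V>. \<exists>U\<in>\<U>. V \<subseteq> U) \<and> locally_finite_in X \<V>))"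

definition cov_dim_le :: "'a topology \<Rightarrow> nat \<Rightarrow> bool" where
  "cov_dim_le T n \<longleftrightarrow>
     (\<forall>\<U>. finite \<U> \<and> (\<forall>U\<in>\<U>. openin T U) \<and> \<Union>\<U> = topspace T \<longrightarrow>
        (\<exists>\<V>. finite \<V> \<and> (\<forall>V\<in>\<V>. openin T V) \<and> \<Union>\<V> = topspace T \<and>
              (\<forall>V\<in>\<V>. \<exists>U\<in>\<U>. V \<subseteq> U) \<and>
              (\<forall>x\<in>topspace T. card {V\<in>\<V>. x \<in> V} \<le> n + 1)))"

definition fibre :: "'a topology \<Rightarrow> ('a \<Rightarrow> 'b) \<Rightarrow> 'b \<Rightarrow> 'a set" where
  "fibre X f y = {x \<in> topspace X. f x = y}"

definition map_dim_le :: "'a topology \<Rightarrow> 'b topology \<Rightarrow> ('a \<Rightarrow> 'b) \<Rightarrow> nat \<Rightarrow> bool" where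
  "map_dim_le X Y f n \<longleftrightarrow> (\<forall>y\<in>topspace Y. cov_dim_le (subtopology X (fibre X f y)) n)"

definition cmaps :: "'a topology \<Rightarrow> 'm metric \<Rightarrow> ('a \<Rightarrow> 'm) set" where
  "cmaps X m = {g. continuous_map X (mtopology_of m) g \<and> g \<in> extensional (topspace X)}"

definition sl_ball :: "'a topology \<Rightarrow> 'm metric \<Rightarrow> ('a \<Rightarrow> 'm) \<Rightarrow> ('a \<Rightarrow> real) \<Rightarrow> ('a \<Rightarrow> 'm) set" where
  "sl_ball X m g \<epsilon> = {h \<in> cmaps X m. \<forall>x\<in>topspace X. mdist m (h x) (g x) < \<epsilon> x}"

definition admissible_eps :: "'a topology \<Rightarrow> ('a \<Rightarrow> real) \<Rightarrow> bool" where
  "admissible_eps X \<epsilon> \<longleftrightarrow> continuous_map X euclideanreal \<epsilon> \<and> (\<forall>x\<in>topspace X. 0 < \<epsilon> x \<and> \<epsilon> x \<le> 1)"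

definition source_limitation_topology :: "'a topology \<Rightarrow> 'm metric \<Rightarrow> ('a \<Rightarrow> 'm) topology" where
  "source_limitation_topology X m = topology (\<lambda>U. U \<subseteq> cmaps X m \<and>
      (\<forall>g\<in>U. \<exists>\<epsilon>. admissible_eps X \<epsilon> \<and> sl_ball X m g \<epsilon> \<subseteq> U))"

definition Rnf :: "'a topology \<Rightarrow> 'm metric \<Rightarrow> ('a \<Rightarrow> 'b) \<Rightarrow> nat \<Rightarrow> 'b set \<Rightarrow> 'm set \<Rightarrow> ('a \<Rightarrow> 'm) set" where
  "Rnf X m f n H Z = {g \<in> cmaps X m. \<forall>y\<in>H.
      cov_dim_le (subtopology (mtopology_of m) (g ` fibre X f y \<inter> Z)) n}"

end

theory Submission
  imports Defs
begin

text \<open>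
  Call A \<subseteq> M r-fine if it is covered by finitely many open sets of M, each inside an r-ball,
  such that no point of M lies in more than n+1 of them. The proof has three parts.
  (1) Paracompactness: regularity, normality and closed shrinkings of locally finite
      refinements, and from these a continuous function 0 < \<phi> \<le> 1 lying below prescribed
      positive tolerances of an open cover.
  (2) Metric dimension: a compact A \<subseteq> M has dim A \<le> n iff A is 1/(k+1)-fine for every k.
      One direction uses a Lebesgue number, the other expands relatively open covers of A
      to open sets of M without increasing the order (via nearest points of A).
  (3) For fixed k the maps g with g(f^-1(y)) \<inter> Z 1/(k+1)-fine for all y \<in> H form an
      open set: fineness survives small perturbations over a neighbourhood of y because f is
      perfect, and the local tolerances are glued to an admissible \<epsilon> by (1).
  By (2), R_n^f(H,Z) is the intersection of these countably many open sets. The argument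
  uses only that f is perfect, Y paracompact, and Z, H closed.
\<close>

subsection \<open>Paracompact spaces\<close>

lemma locally_finite_in_imp_library:
  assumes "Defs.locally_finite_in X \<V>" and "\<Union>\<V> \<subseteq> topspace X"
  shows "Abstract_Topology.locally_finite_in X \<V>"
  using assms unfolding Defs.locally_finite_in_def Abstract_Topology.locally_finite_in_def
  by blast

lemma paracompact_refinement:
  assumes "paracompact_space X" and "\<forall>U\<in>\<U>. openin X U" and "\<Union>\<U> = topspace X"
  obtains \<V> where "\<forall>V\<in>\<V>. openin X V" and "\<Union>\<V> = topspace X"
    and "\<forall>V\<in>\<V>. \<exists>U\<in>\<U>. V \<subseteq> U" and "Abstract_Topology.locally_finite_in X \<V>"
proof -
  have "\<exists>\<V>. (\<forall>V\<in>\<V>. openin X V) \<and> \<Union>\<V> = topspace X \<and>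
          (\<forall>V\<in>\<V>. \<exists>U\<in>\<U>. V \<subseteq> U) \<and> Defs.locally_finite_in X \<V>"
    using assms unfolding paracompact_space_def by (simp only:)
  then show ?thesis
    using that locally_finite_in_imp_library by (metis order_refl)
qed

text \<open>With D a point this
  gives regularity, with D closed (and regularity) it gives normality.\<close>

lemma paracompact_separation:
  assumes P: "paracompact_space Y" and C: "closedin Y C"
    and loc: "\<And>c. c \<in> C \<Longrightarrow> \<exists>U. openin Y U \<and> c \<in> U \<and> disjnt D (Y closure_of U)"
  obtains G where "openin Y G" and "C \<subseteq> G" and "disjnt D (Y closure_of G)"
proof -
  define \<U> where "\<U> = insert (topspace Y - C) {U. openin Y U \<and> disjnt D (Y closure_of U)}"
  have opn: "\<forall>U\<in>\<U>. openin Y U"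
    using C by (auto simp: \<U>_def)
  moreover have "\<Union>\<U> = topspace Y"
  proof
    show "\<Union>\<U> \<subseteq> topspace Y" using opn openin_subset by blast
    show "topspace Y \<subseteq> \<Union>\<U>"
    proof
      fix y assume "y \<in> topspace Y"
      show "y \<in> \<Union>\<U>"
      proof (cases "y \<in> C")
        case True
        then obtain U where "openin Y U" "y \<in> U" "disjnt D (Y closure_of U)" using loc by blast
        then show ?thesis by (auto simp: \<U>_def)
      qed (use \<open>y \<in> topspace Y\<close> in \<open>auto simp: \<U>_def\<close>)
    qed
  qed
  ultimately obtain \<V> where V: "\<forall>V\<in>\<V>. openin Y V" "\<Union>\<V> = topspace Y"
      "\<forall>V\<in>\<V>. \<exists>U\<in>\<U>. V \<subseteq> U" "Abstract_Topology.locally_finite_in Y \<V>"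
    by (rule paracompact_refinement[OF P])
  define \<V>' where "\<V>' = {V\<in>\<V>. V \<inter> C \<noteq> {}}"
  have lf: "Abstract_Topology.locally_finite_in Y \<V>'"
    unfolding \<V>'_def by (rule locally_finite_in_subset[OF V(4)]) blast
  have "disjnt D (Y closure_of V)" if V': "V \<in> \<V>'" for V
  proof -
    obtain U where U: "U \<in> \<U>" "V \<subseteq> U" "V \<inter> C \<noteq> {}"
      using V' V(3) unfolding \<V>'_def by blast
    then have "U \<noteq> topspace Y - C" by blast
    then have "disjnt D (Y closure_of U)" using U(1) unfolding \<U>_def by blast
    then show ?thesis
      using closure_of_mono[OF U(2)] unfolding disjnt_def by blast
  qed
  then have "disjnt D (Y closure_of \<Union>\<V>')"
    unfolding closure_of_locally_finite_Union[OF lf] disjnt_def by blast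
  moreover have "openin Y (\<Union>\<V>')"
    using V(1) unfolding \<V>'_def by blast
  moreover have "C \<subseteq> \<Union>\<V>'"
    using V(2) closedin_subset[OF C] unfolding \<V>'_def by blast
  ultimately show ?thesis using that by blast
qed

lemma paracompact_imp_regular:
  assumes P: "paracompact_space Y"
  shows "regular_space Y"
  unfolding regular_space
proof (intro allI impI)
  fix C a assume Ca: "closedin Y C \<and> a \<in> topspace Y - C"
  have local: "\<exists>U. openin Y U \<and> c \<in> U \<and> disjnt {a} (Y closure_of U)" if c: "c \<in> C" for c
  proof -
    have "c \<in> topspace Y" "a \<in> topspace Y" "c \<noteq> a" using c Ca closedin_subset by auto
    moreover have "Hausdorff_space Y" using P by (simp add: paracompact_space_def)
    ultimately obtain U W where "openin Y U" "openin Y W" "c \<in> U" "a \<in> W" "disjnt U W"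
      unfolding Hausdorff_space_def by metis
    then show ?thesis
      using openin_Int_closure_of_eq_empty[of Y W U] unfolding disjnt_def by blast
  qed
  have "closedin Y C" using Ca by blast
  then obtain G where G: "openin Y G" "C \<subseteq> G" "disjnt {a} (Y closure_of G)"
    by (rule paracompact_separation[OF P _ local])
  have "G \<inter> Y closure_of (topspace Y - Y closure_of G) = {}"
    using openin_Int_closure_of_eq_empty[OF G(1)] closure_of_subset[OF openin_subset[OF G(1)]]
    by blast
  then show "\<exists>U. openin Y U \<and> a \<in> U \<and> disjnt C (Y closure_of U)"
    using G Ca by (intro exI[of _ "topspace Y - Y closure_of G"]) (auto simp: disjnt_def)
qed

lemma paracompact_imp_normal:
  assumes P: "paracompact_space Y"
  shows "normal_space Y"
  unfolding normal_space
proof (intro allI impI)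
  fix S T assume ST: "closedin Y S \<and> closedin Y T \<and> disjnt S T"
  have local: "\<exists>U. openin Y U \<and> c \<in> U \<and> disjnt T (Y closure_of U)" if c: "c \<in> S" for c
  proof -
    have "closedin Y T \<and> c \<in> topspace Y - T"
      using ST c closedin_subset unfolding disjnt_def by blast
    then show ?thesis
      using paracompact_imp_regular[OF P] unfolding regular_space by blast
  qed
  have "closedin Y S" using ST by blast
  then obtain U where "openin Y U" "S \<subseteq> U" "disjnt T (Y closure_of U)"
    by (rule paracompact_separation[OF P _ local])
  then show "\<exists>U. openin Y U \<and> S \<subseteq> U \<and> disjnt T (Y closure_of U)" by blast
qed

lemma paracompact_closed_shrinking:
  assumes P: "paracompact_space Y" and opn: "\<forall>U\<in>\<U>. openin Y U" and cov: "\<Union>\<U> = topspace Y"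
  obtains \<V> C where "\<forall>V\<in>\<V>. openin Y V" and "\<forall>V\<in>\<V>. \<exists>U\<in>\<U>. V \<subseteq> U"
    and "Abstract_Topology.locally_finite_in Y \<V>"
    and "\<forall>V. closedin Y (C V) \<and> C V \<subseteq> V" and "\<forall>y\<in>topspace Y. \<exists>V\<in>\<V>. y \<in> C V"
proof -
  obtain \<V> where V: "\<forall>V\<in>\<V>. openin Y V" "\<Union>\<V> = topspace Y"
      "\<forall>V\<in>\<V>. \<exists>U\<in>\<U>. V \<subseteq> U" "Abstract_Topology.locally_finite_in Y \<V>"
    by (rule paracompact_refinement[OF P opn cov])
  define \<A> where "\<A> = {A. openin Y A \<and> (\<exists>V\<in>\<V>. Y closure_of A \<subseteq> V)}"
  have "\<forall>A\<in>\<A>. openin Y A" by (simp add: \<A>_def)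
  moreover have "\<Union>\<A> = topspace Y"
  proof
    show "\<Union>\<A> \<subseteq> topspace Y" unfolding \<A>_def using openin_subset by blast
    show "topspace Y \<subseteq> \<Union>\<A>"
    proof
      fix y assume "y \<in> topspace Y"
      then obtain V where V': "V \<in> \<V>" "y \<in> V" using V(2) by blast
      then have "openin Y V" using V(1) by blast
      then obtain A B where A: "openin Y A" "closedin Y B" "y \<in> A" "A \<subseteq> B" "B \<subseteq> V"
        using paracompact_imp_regular[OF P] V'(2)
        unfolding neighbourhood_base_of_closedin[symmetric] neighbourhood_base_of by metis
      then have "Y closure_of A \<subseteq> V" using closure_of_minimal[of A B Y] by blast
      then have "A \<in> \<A>" using A(1) V'(1) unfolding \<A>_def by blast
      then show "y \<in> \<Union>\<A>" using A(3) by blast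
    qed
  qed
  ultimately obtain \<B> where B: "\<forall>B\<in>\<B>. openin Y B" "\<Union>\<B> = topspace Y"
      "\<forall>B\<in>\<B>. \<exists>A\<in>\<A>. B \<subseteq> A" "Abstract_Topology.locally_finite_in Y \<B>"
    by (rule paracompact_refinement[OF P])
  define C where "C V = \<Union>((\<lambda>S. Y closure_of S) ` {B\<in>\<B>. Y closure_of B \<subseteq> V})" for V
  have C_closed: "closedin Y (C V) \<and> C V \<subseteq> V" for V
    unfolding C_def
    by (rule conjI, rule closedin_Union_locally_finite_closure, rule locally_finite_in_subset[OF B(4)])
       blast+
  have C_cov: "\<exists>V\<in>\<V>. y \<in> C V" if y: "y \<in> topspace Y" for y
  proof -
    obtain B where B': "B \<in> \<B>" "y \<in> B" using B(2) y by blast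
    then obtain A V where AV: "V \<in> \<V>" "B \<subseteq> A" "Y closure_of A \<subseteq> V"
      using B(3) unfolding \<A>_def by blast
    have "y \<in> Y closure_of B" using B'(2) y closure_of_subset_Int[of Y B] by blast
    moreover have "Y closure_of B \<subseteq> V" using closure_of_mono[OF AV(2)] AV(3) by (rule order_trans)
    ultimately have "y \<in> C V" using B'(1) unfolding C_def by blast
    then show ?thesis using AV(1) by blast
  qed
  show ?thesis
    by (rule that[OF V(1,3,4), of C]) (use C_closed C_cov in blast)+
qed

lemma continuous_map_finite_Max:
  assumes "finite F" and "F \<noteq> {}" and "\<And>V. V \<in> F \<Longrightarrow> continuous_map Y euclideanreal (h V)"
  shows "continuous_map Y euclideanreal (\<lambda>y. Max ((\<lambda>V. h V y) ` F))"
  using assms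
proof (induction F rule: finite_ne_induct)
  case (singleton V)
  then show ?case by simp
next
  case (insert V F)
  then have "(\<lambda>y. Max ((\<lambda>V. h V y) ` insert V F)) = (\<lambda>y. max (h V y) (Max ((\<lambda>V. h V y) ` F)))"
    by auto
  then show ?case using insert by (simp add: continuous_map_real_max)
qed

lemma continuous_map_locally:
  assumes "\<And>x. x \<in> topspace X \<Longrightarrow> \<exists>N. openin X N \<and> x \<in> N \<and> continuous_map (subtopology X N) Y g"
  shows "continuous_map X Y g"
  by (rule pasting_lemma[where I = "{N. openin X N \<and> continuous_map (subtopology X N) Y g}"
        and T = "\<lambda>N. N" and f = "\<lambda>_. g"]) (use assms in auto)

lemma Max_extend_by_zeros:
  fixes h :: "'b \<Rightarrow> real"
  assumes F: "finite F" and T: "T \<subseteq> F" "T \<noteq> {}"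
    and zero: "\<forall>V\<in>F - T. h V = 0" and nonneg: "\<forall>V\<in>T. 0 \<le> h V"
  shows "Max (h ` F) = Max (h ` T)"
proof (rule antisym)
  have finT: "finite T" using F T(1) finite_subset by blast
  obtain V0 where V0: "V0 \<in> T" using T(2) by blast
  show "Max (h ` F) \<le> Max (h ` T)"
  proof (rule Max.boundedI)
    show "finite (h ` F)" "h ` F \<noteq> {}" using F T by auto
    fix t assume "t \<in> h ` F"
    then obtain V where V: "V \<in> F" "t = h V" by blast
    show "t \<le> Max (h ` T)"
    proof (cases "V \<in> T")
      case True
      then show ?thesis using V finT by (intro Max_ge) auto
    next
      case False
      then have "t \<le> h V0" using V zero nonneg V0 by auto
      also have "h V0 \<le> Max (h ` T)" using V0 finT by (intro Max_ge) auto
      finally show ?thesis .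
    qed
  qed
  show "Max (h ` T) \<le> Max (h ` F)" using F T by (intro Max_mono) auto
qed

text \<open>The pointwise maximum of a locally finite family of nonnegative continuous functions,
  each vanishing outside its own member of an open cover, is continuous: near every point
  it is a maximum over finitely many of them.\<close>

lemma continuous_map_locally_finite_Max:
  fixes h :: "'a set \<Rightarrow> 'a \<Rightarrow> real"
  assumes lf: "Abstract_Topology.locally_finite_in Y \<V>" and cov: "\<Union>\<V> = topspace Y"
    and cont: "\<And>V. V \<in> \<V> \<Longrightarrow> continuous_map Y euclideanreal (h V)"
    and nonneg: "\<And>V y. \<lbrakk>V \<in> \<V>; y \<in> topspace Y\<rbrakk> \<Longrightarrow> 0 \<le> h V y"
    and vanish: "\<And>V y. \<lbrakk>V \<in> \<V>; y \<in> topspace Y; y \<notin> V\<rbrakk> \<Longrightarrow> h V y = 0"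
  shows "continuous_map Y euclideanreal (\<lambda>y. Max ((\<lambda>V. h V y) ` {V\<in>\<V>. y \<in> V}))"
proof (rule continuous_map_locally)
  fix y0 assume "y0 \<in> topspace Y"
  then obtain N where N: "openin Y N" "y0 \<in> N" "finite {V\<in>\<V>. V \<inter> N \<noteq> {}}"
    using lf unfolding Abstract_Topology.locally_finite_in_def by blast
  define F where "F = {V\<in>\<V>. V \<inter> N \<noteq> {}}"
  have star: "{V\<in>\<V>. y \<in> V} \<subseteq> F" "{V\<in>\<V>. y \<in> V} \<noteq> {}" if "y \<in> N" for y
    using that cov openin_subset[OF N(1)] by (auto simp: F_def)
  have local_eq: "Max ((\<lambda>V. h V y) ` F) = Max ((\<lambda>V. h V y) ` {V\<in>\<V>. y \<in> V})"
    if y: "y \<in> N" for y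
  proof (rule Max_extend_by_zeros)
    have "y \<in> topspace Y" using y openin_subset[OF N(1)] by blast
    then show "\<forall>V\<in>F - {V\<in>\<V>. y \<in> V}. h V y = 0" "\<forall>V\<in>{V\<in>\<V>. y \<in> V}. 0 \<le> h V y"
      using vanish nonneg by (auto simp: F_def)
  qed (use star[OF y] N(3) in \<open>auto simp: F_def\<close>)
  have "continuous_map Y euclideanreal (\<lambda>y. Max ((\<lambda>V. h V y) ` F))"
    using N(3) star(2)[OF N(2)] star(1)[OF N(2)] cont
    by (intro continuous_map_finite_Max) (auto simp: F_def)
  then have "continuous_map (subtopology Y N) euclideanreal
               (\<lambda>y. Max ((\<lambda>V. h V y) ` {V\<in>\<V>. y \<in> V}))"
    by (rule continuous_map_eq[OF continuous_map_from_subtopology]) (simp add: local_eq)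
  then show "\<exists>N. openin Y N \<and> y0 \<in> N \<and>
      continuous_map (subtopology Y N) euclideanreal (\<lambda>y. Max ((\<lambda>V. h V y) ` {V\<in>\<V>. y \<in> V}))"
    using N by blast
qed

text \<open>They are Urysohn functions for the pairs C V \<subseteq> V of a
  closed shrinking.\<close>

lemma paracompact_bump_functions:
  assumes P: "paracompact_space Y" and opn: "\<forall>U\<in>\<U>. openin Y U" and cov: "\<Union>\<U> = topspace Y"
  obtains \<V> \<psi> where "\<forall>V\<in>\<V>. \<exists>U\<in>\<U>. V \<subseteq> U" and "Abstract_Topology.locally_finite_in Y \<V>"
    and "\<Union>\<V> = topspace Y"
    and "\<forall>V\<in>\<V>. continuous_map Y euclideanreal (\<psi> V) \<and>
           (\<forall>y\<in>topspace Y. 0 \<le> \<psi> V y \<and> \<psi> V y \<le> 1 \<and> (y \<notin> V \<longrightarrow> \<psi> V y = 0))"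
    and "\<forall>y\<in>topspace Y. \<exists>V\<in>\<V>. y \<in> V \<and> \<psi> V y = 1"
proof -
  obtain \<V> C where V: "\<forall>V\<in>\<V>. openin Y V" "\<forall>V\<in>\<V>. \<exists>U\<in>\<U>. V \<subseteq> U"
      "Abstract_Topology.locally_finite_in Y \<V>"
    and C: "\<forall>V. closedin Y (C V) \<and> C V \<subseteq> V" "\<forall>y\<in>topspace Y. \<exists>V\<in>\<V>. y \<in> C V"
    by (rule paracompact_closed_shrinking[OF P opn cov])
  have V_cov: "\<Union>\<V> = topspace Y"
  proof
    show "\<Union>\<V> \<subseteq> topspace Y" using V(1) openin_subset by blast
    show "topspace Y \<subseteq> \<Union>\<V>" using C by blast
  qed
  have "\<exists>\<psi>. continuous_map Y euclideanreal \<psi> \<and>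
          (\<forall>y\<in>topspace Y. 0 \<le> \<psi> y \<and> \<psi> y \<le> 1 \<and> (y \<notin> V \<longrightarrow> \<psi> y = 0)) \<and> (\<forall>y\<in>C V. \<psi> y = 1)"
    if VV: "V \<in> \<V>" for V
  proof -
    have "closedin Y (topspace Y - V)" using V(1) VV by blast
    moreover have "closedin Y (C V)" "disjnt (topspace Y - V) (C V)"
      using C(1) unfolding disjnt_def by blast+
    ultimately obtain \<psi> where "continuous_map Y (top_of_set {0..1::real}) \<psi>"
        "\<psi> ` (topspace Y - V) \<subseteq> {0}" "\<psi> ` C V \<subseteq> {1}"
      by (rule Urysohn_lemma[OF paracompact_imp_normal[OF P], of "topspace Y - V" "C V" 0 1]) auto
    then show ?thesis
      unfolding continuous_map_in_subtopology by (intro exI[of _ \<psi>]) auto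
  qed
  then have "\<forall>V\<in>\<V>. \<exists>\<psi>. continuous_map Y euclideanreal \<psi> \<and>
      (\<forall>y\<in>topspace Y. 0 \<le> \<psi> y \<and> \<psi> y \<le> 1 \<and> (y \<notin> V \<longrightarrow> \<psi> y = 0)) \<and> (\<forall>y\<in>C V. \<psi> y = 1)"
    by blast
  then obtain \<psi> where \<psi>: "\<forall>V\<in>\<V>. continuous_map Y euclideanreal (\<psi> V) \<and>
      (\<forall>y\<in>topspace Y. 0 \<le> \<psi> V y \<and> \<psi> V y \<le> 1 \<and> (y \<notin> V \<longrightarrow> \<psi> V y = 0)) \<and> (\<forall>y\<in>C V. \<psi> V y = 1)"
    by (rule bchoice[THEN exE])
  have hit: "\<forall>y\<in>topspace Y. \<exists>V\<in>\<V>. y \<in> V \<and> \<psi> V y = 1"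
  proof
    fix y assume "y \<in> topspace Y"
    then obtain V where "V \<in> \<V>" "y \<in> C V" using C(2) by blast
    then show "\<exists>V\<in>\<V>. y \<in> V \<and> \<psi> V y = 1" using C(1) \<psi> by blast
  qed
  show ?thesis
    by (rule that[OF V(2,3) V_cov, of \<psi>]) (use \<psi> hit in blast)+
qed

text \<open>It is the maximum of bump functions scaled by the tolerances.\<close>

lemma paracompact_positive_function:
  assumes P: "paracompact_space Y" and opn: "\<And>i. i \<in> I \<Longrightarrow> openin Y (U i)"
    and pos: "\<And>i. i \<in> I \<Longrightarrow> 0 < c i" and cov: "topspace Y \<subseteq> (\<Union>i\<in>I. U i)"
  obtains \<phi> where "continuous_map Y euclideanreal \<phi>"
    and "\<And>y. y \<in> topspace Y \<Longrightarrow> 0 < \<phi> y \<and> \<phi> y \<le> 1 \<and> (\<exists>i\<in>I. y \<in> U i \<and> \<phi> y \<le> c i)"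
proof -
  have "\<forall>W\<in>U ` I. openin Y W" using opn by blast
  moreover have "\<Union>(U ` I) = topspace Y" using opn cov openin_subset by blast
  ultimately obtain \<V> \<psi> where V: "\<forall>V\<in>\<V>. \<exists>W\<in>U ` I. V \<subseteq> W"
      "Abstract_Topology.locally_finite_in Y \<V>" "\<Union>\<V> = topspace Y"
    and \<psi>: "\<forall>V\<in>\<V>. continuous_map Y euclideanreal (\<psi> V) \<and>
           (\<forall>y\<in>topspace Y. 0 \<le> \<psi> V y \<and> \<psi> V y \<le> 1 \<and> (y \<notin> V \<longrightarrow> \<psi> V y = 0))"
      "\<forall>y\<in>topspace Y. \<exists>V\<in>\<V>. y \<in> V \<and> \<psi> V y = 1"
    by (rule paracompact_bump_functions[OF P])
  have "\<forall>V\<in>\<V>. \<exists>j. j \<in> I \<and> V \<subseteq> U j" using V(1) by blast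
  then obtain i where "\<forall>V\<in>\<V>. i V \<in> I \<and> V \<subseteq> U (i V)"
    by (rule bchoice[THEN exE])
  then have i: "i V \<in> I" "V \<subseteq> U (i V)" if "V \<in> \<V>" for V
    using that by blast+
  define h where "h V y = min 1 (c (i V)) * \<psi> V y" for V y
  have h_bounds: "0 \<le> h V y \<and> h V y \<le> min 1 (c (i V))" if "V \<in> \<V>" "y \<in> topspace Y" for V y
    using \<psi>(1) that pos[OF i(1)[OF that(1)]] unfolding h_def
    by (intro conjI mult_nonneg_nonneg mult_left_le) auto
  define \<phi> where "\<phi> y = Max ((\<lambda>V. h V y) ` {V\<in>\<V>. y \<in> V})" for y
  show ?thesis
  proof
    show "continuous_map Y euclideanreal \<phi>"
      unfolding \<phi>_def
    proof (rule continuous_map_locally_finite_Max[OF V(2,3)])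
      show "continuous_map Y euclideanreal (h V)" if "V \<in> \<V>" for V
        unfolding h_def using \<psi>(1) that by (intro continuous_map_real_mult_left) blast
    qed (use h_bounds \<psi>(1) in \<open>auto simp: h_def\<close>)
  next
    fix y assume y: "y \<in> topspace Y"
    have fin: "finite {V\<in>\<V>. y \<in> V}"
    proof -
      obtain N where "openin Y N" "y \<in> N" "finite {V\<in>\<V>. V \<inter> N \<noteq> {}}"
        using V(2) y unfolding Abstract_Topology.locally_finite_in_def by blast
      then show ?thesis by (rule_tac finite_subset[of _ "{V\<in>\<V>. V \<inter> N \<noteq> {}}"]) auto
    qed
    obtain V0 where V0: "V0 \<in> \<V>" "y \<in> V0" "\<psi> V0 y = 1" using \<psi>(2) y by blast
    have "0 < h V0 y" using V0 pos[OF i(1)[OF V0(1)]] by (simp add: h_def)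
    also have "h V0 y \<le> \<phi> y" unfolding \<phi>_def using V0 fin by (intro Max_ge) auto
    finally have "0 < \<phi> y" .
    have "\<phi> y \<in> (\<lambda>V. h V y) ` {V\<in>\<V>. y \<in> V}"
      unfolding \<phi>_def using V0 fin by (intro Max_in) auto
    then obtain V where V: "V \<in> \<V>" "y \<in> V" "\<phi> y = h V y" by blast
    then show "0 < \<phi> y \<and> \<phi> y \<le> 1 \<and> (\<exists>i\<in>I. y \<in> U i \<and> \<phi> y \<le> c i)"
      using \<open>0 < \<phi> y\<close> h_bounds[OF V(1) y] i[OF V(1)] by force
  qed
qed

lemma paracompact_tolerance_on_closed:
  assumes P: "paracompact_space Y" and Hc: "closedin Y H"
    and loc: "\<forall>y\<in>H. \<delta> y > 0 \<and> openin Y (V y) \<and> y \<in> V y"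
  obtains \<phi> where "continuous_map Y euclideanreal \<phi>" and "\<forall>y\<in>topspace Y. 0 < \<phi> y \<and> \<phi> y \<le> 1"
    and "\<forall>y'\<in>H. \<exists>y\<in>H. y' \<in> V y \<and> \<phi> y' \<le> \<delta> y"
proof -
  define U where "U y = (if y \<in> H then V y else topspace Y - H)" for y
  define c where "c y = (if y \<in> H then \<delta> y else 1)" for y
  have "openin Y (U y)" if "y \<in> topspace Y" for y
    using loc Hc unfolding U_def by (auto simp: closedin_def)
  moreover have "0 < c y" if "y \<in> topspace Y" for y
    using loc unfolding c_def by auto
  moreover have "topspace Y \<subseteq> (\<Union>y\<in>topspace Y. U y)"
    using loc unfolding U_def by fastforce
  ultimately obtain \<phi> where \<phi>: "continuous_map Y euclideanreal \<phi>"
      "\<And>y. y \<in> topspace Y \<Longrightarrow> 0 < \<phi> y \<and> \<phi> y \<le> 1 \<and> (\<exists>i\<in>topspace Y. y \<in> U i \<and> \<phi> y \<le> c i)"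
    by (rule paracompact_positive_function[OF P]) blast+
  have "\<exists>y\<in>H. y' \<in> V y \<and> \<phi> y' \<le> \<delta> y" if y': "y' \<in> H" for y'
  proof -
    obtain i where i: "i \<in> topspace Y" "y' \<in> U i" "\<phi> y' \<le> c i"
      using \<phi>(2) y' closedin_subset[OF Hc] by blast
    then have "i \<in> H" using y' unfolding U_def by (auto split: if_splits)
    then show ?thesis using i unfolding U_def c_def by auto
  qed
  then show ?thesis using that \<phi> by blast
qed

subsection \<open>Dimension of compact subsets of a metric space\<close>

lemma openin_mball_of: "openin (mtopology_of m) (mball_of m x r)"
  unfolding mtopology_of_def mball_of_def
  by (rule Metric_space.openin_mball[OF Metric_space_mspace_mdist])

lemma centre_in_mball_of:
  assumes "x \<in> mspace m" and "r > 0"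
  shows "x \<in> mball_of m x r"
proof -
  have "mdist m x x = 0" using assms(1) by simp
  then show ?thesis using assms by (simp del: mdist_zero)
qed

lemma openin_mtopology_of_ball:
  assumes "openin (mtopology_of m) G" and "x \<in> G"
  obtains r where "r > 0" and "mball_of m x r \<subseteq> G"
  using assms Metric_space.openin_mtopology[OF Metric_space_mspace_mdist]
  unfolding mtopology_of_def mball_of_def by metis

lemma lebesgue_number_of:
  assumes "compactin (mtopology_of m) S" and "S \<subseteq> \<Union>\<C>"
    and "\<And>U. U \<in> \<C> \<Longrightarrow> openin (mtopology_of m) U"
  obtains \<epsilon> where "\<epsilon> > 0" and "\<forall>x\<in>S. \<exists>U\<in>\<C>. mball_of m x \<epsilon> \<subseteq> U"
proof -
  have "\<exists>\<epsilon>>0. \<forall>x\<in>S. \<exists>U\<in>\<C>. mball_of m x \<epsilon> \<subseteq> U"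
    using Metric_space.lebesgue_number[OF Metric_space_mspace_mdist, of m S \<C>] assms
    unfolding mtopology_of_def mball_of_def by blast
  then show ?thesis using that by blast
qed

lemma nearest_point_of:
  assumes "compactin (mtopology_of m) A" and "A \<noteq> {}" and "x \<in> mspace m"
  obtains a where "a \<in> A" and "\<And>b. b \<in> A \<Longrightarrow> mdist m x a \<le> mdist m x b"
proof -
  have "continuous_map (mtopology_of m) euclidean (mdist m x)"
    using assms(3) by (intro continuous_map_mdist continuous_map_id continuous_map_const[THEN iffD2]) auto
  then have "compact (mdist m x ` A)"
    using image_compactin[OF assms(1)] by (metis compactin_euclidean_iff)
  then obtain d where "d \<in> mdist m x ` A" "\<forall>t\<in>mdist m x ` A. d \<le> t"
    using compact_attains_inf assms(2) by (metis image_is_empty)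
  then show ?thesis using that by blast
qed

lemma mball_of_recentre:
  assumes "W \<subseteq> mball_of m c r" and "a \<in> W"
  shows "W \<subseteq> mball_of m a (2 * r)"
proof
  fix y assume "y \<in> W"
  then have "a \<in> mspace m" "c \<in> mspace m" "y \<in> mspace m" "mdist m a c < r" "mdist m c y < r"
    using assms by (auto simp: mdist_commute)
  then show "y \<in> mball_of m a (2 * r)"
    using mdist_triangle[of a m c y] by simp
qed

lemma card_members_image_le:
  assumes "finite \<V>"
  shows "card {W \<in> F ` \<V>. x \<in> W} \<le> card {V\<in>\<V>. x \<in> F V}"
proof -
  have "{W \<in> F ` \<V>. x \<in> W} = F ` {V\<in>\<V>. x \<in> F V}" by blast
  then show ?thesis using assms by (simp add: card_image_le)
qed

text \<open>Counting at all points of M,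
  not only of A, makes the property stable under perturbation of A.\<close>

definition fine_cover :: "'m metric \<Rightarrow> nat \<Rightarrow> real \<Rightarrow> 'm set \<Rightarrow> bool" where
  "fine_cover m n r A \<longleftrightarrow> (\<exists>\<W>. finite \<W> \<and>
     (\<forall>W\<in>\<W>. openin (mtopology_of m) W \<and> (\<exists>c\<in>mspace m. W \<subseteq> mball_of m c r)) \<and>
     A \<subseteq> \<Union>\<W> \<and> (\<forall>x\<in>mspace m. card {W\<in>\<W>. x \<in> W} \<le> n + 1))"

lemma fine_cover_mono:
  assumes "fine_cover m n r A" and "r \<le> r'"
  shows "fine_cover m n r' A"
proof -
  have "mball_of m c r \<subseteq> mball_of m c r'" for c using assms(2) by auto
  then show ?thesis using assms(1) unfolding fine_cover_def by (meson order_trans)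
qed

text \<open>If A is r-fine for all r > 0 then dim A \<le> n: given a finite open cover of A with
  Lebesgue number \<epsilon>, the traces on A of an \<epsilon>/2-fine cover refine it.\<close>

lemma cov_dim_le_if_fine_covers:
  assumes cA: "compactin (mtopology_of m) A" and fine: "\<And>r. r > 0 \<Longrightarrow> fine_cover m n r A"
  shows "cov_dim_le (subtopology (mtopology_of m) A) n"
  unfolding cov_dim_le_def
proof (intro allI impI)
  let ?T = "subtopology (mtopology_of m) A"
  fix \<U> assume U: "finite \<U> \<and> (\<forall>U\<in>\<U>. openin ?T U) \<and> \<Union>\<U> = topspace ?T"
  have tA: "topspace ?T = A"
    using compactin_subset_topspace[OF cA] by auto
  have "\<forall>U\<in>\<U>. \<exists>G. openin (mtopology_of m) G \<and> U = G \<inter> A"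
    using U by (simp add: openin_subtopology)
  then obtain G where G: "\<forall>U\<in>\<U>. openin (mtopology_of m) (G U) \<and> U = G U \<inter> A"
    by (rule bchoice[THEN exE])
  have "A \<subseteq> \<Union>(G ` \<U>)" using U G tA by blast
  then obtain \<epsilon> where \<epsilon>: "\<epsilon> > 0" "\<forall>x\<in>A. \<exists>U\<in>G ` \<U>. mball_of m x \<epsilon> \<subseteq> U"
    by (rule lebesgue_number_of[OF cA]) (use G in blast)
  obtain \<W> where W: "finite \<W>" "\<forall>W\<in>\<W>. openin (mtopology_of m) W \<and> (\<exists>c\<in>mspace m. W \<subseteq> mball_of m c (\<epsilon>/2))"
      "A \<subseteq> \<Union>\<W>" "\<forall>x\<in>mspace m. card {W\<in>\<W>. x \<in> W} \<le> n + 1"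
    using fine[of "\<epsilon>/2"] \<epsilon>(1) unfolding fine_cover_def by auto
  define \<V> where "\<V> = (\<lambda>W. W \<inter> A) ` {W\<in>\<W>. W \<inter> A \<noteq> {}}"
  show "\<exists>\<V>. finite \<V> \<and> (\<forall>V\<in>\<V>. openin ?T V) \<and> \<Union>\<V> = topspace ?T \<and>
              (\<forall>V\<in>\<V>. \<exists>U\<in>\<U>. V \<subseteq> U) \<and> (\<forall>x\<in>topspace ?T. card {V\<in>\<V>. x \<in> V} \<le> n + 1)"
  proof (intro exI conjI ballI)
    show "finite \<V>" using W(1) by (simp add: \<V>_def)
    show "openin ?T V" if "V \<in> \<V>" for V
      using that W(2) unfolding \<V>_def by (auto intro: openin_subtopology_Int)
    show "\<Union>\<V> = topspace ?T" using W(3) unfolding tA \<V>_def by blast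
    show "\<exists>U\<in>\<U>. V \<subseteq> U" if V: "V \<in> \<V>" for V
    proof -
      obtain W a where Wa: "W \<in> \<W>" "V = W \<inter> A" "a \<in> W" "a \<in> A"
        using V unfolding \<V>_def by blast
      obtain c where "W \<subseteq> mball_of m c (\<epsilon>/2)" using W(2) Wa(1) by blast
      then have "W \<subseteq> mball_of m a \<epsilon>" using mball_of_recentre[OF _ Wa(3)] by fastforce
      moreover obtain U where "U \<in> \<U>" "mball_of m a \<epsilon> \<subseteq> G U" using \<epsilon>(2) Wa(4) by blast
      ultimately show ?thesis using G Wa(2) by blast
    qed
    fix x assume "x \<in> topspace ?T"
    then have "x \<in> mspace m" using tA compactin_subset_topspace[OF cA] by auto
    have "card {V\<in>\<V>. x \<in> V} \<le> card {W\<in>{W\<in>\<W>. W \<inter> A \<noteq> {}}. x \<in> W \<inter> A}"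
      unfolding \<V>_def using W(1) by (intro card_members_image_le) simp
    also have "\<dots> \<le> card {W\<in>\<W>. x \<in> W}" using W(1) by (intro card_mono) auto
    also have "\<dots> \<le> n + 1" using W(4) \<open>x \<in> mspace m\<close> by blast
    finally show "card {V\<in>\<V>. x \<in> V} \<le> n + 1" .
  qed
qed

text \<open>If dim A \<le> n then A has finite relatively open covers of order \<le> n+1 by sets of
  arbitrarily small radius (refine a finite cover of A by r-balls).\<close>

lemma cov_dim_le_small_relative_cover:
  assumes cA: "compactin (mtopology_of m) A"
    and dim: "cov_dim_le (subtopology (mtopology_of m) A) n" and r: "r > 0"
  obtains \<V> where "finite \<V>" and "\<forall>V\<in>\<V>. openin (subtopology (mtopology_of m) A) V"
    and "\<Union>\<V> = A" and "\<forall>V\<in>\<V>. \<exists>c\<in>mspace m. V \<subseteq> mball_of m c r"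
    and "\<forall>x\<in>A. card {V\<in>\<V>. x \<in> V} \<le> n + 1"
proof -
  let ?T = "subtopology (mtopology_of m) A"
  have AM: "A \<subseteq> mspace m" using compactin_subset_topspace[OF cA] by simp
  then have tA: "topspace ?T = A" by auto
  have cov: "A \<subseteq> \<Union>((\<lambda>a. mball_of m a r) ` A)"
  proof
    fix a assume "a \<in> A"
    then have "a \<in> mball_of m a r" using AM r by (intro centre_in_mball_of) auto
    then show "a \<in> \<Union>((\<lambda>a. mball_of m a r) ` A)" using \<open>a \<in> A\<close> by blast
  qed
  have opn: "openin (mtopology_of m) B" if "B \<in> (\<lambda>a. mball_of m a r) ` A" for B
    using that by (auto simp: openin_mball_of)
  obtain F where F: "finite F" "F \<subseteq> (\<lambda>a. mball_of m a r) ` A" "A \<subseteq> \<Union>F"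
    using compactinD[OF cA opn cov] by blast
  define \<U> where "\<U> = (\<lambda>B. B \<inter> A) ` F"
  have "\<forall>U\<in>\<U>. openin ?T U"
  proof
    fix U assume "U \<in> \<U>"
    then obtain B where "B \<in> F" "U = B \<inter> A" unfolding \<U>_def by blast
    moreover have "openin (mtopology_of m) B" using opn F(2) \<open>B \<in> F\<close> by blast
    ultimately show "openin ?T U" by (simp add: openin_subtopology_Int)
  qed
  moreover have "finite \<U>" using F(1) unfolding \<U>_def by simp
  moreover have "\<Union>\<U> = topspace ?T" using F(3) unfolding \<U>_def tA by blast
  ultimately have "finite \<U> \<and> (\<forall>U\<in>\<U>. openin ?T U) \<and> \<Union>\<U> = topspace ?T"
    by blast
  then have "\<exists>\<V>. finite \<V> \<and> (\<forall>V\<in>\<V>. openin ?T V) \<and> \<Union>\<V> = topspace ?T \<and>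
      (\<forall>V\<in>\<V>. \<exists>U\<in>\<U>. V \<subseteq> U) \<and> (\<forall>x\<in>topspace ?T. card {V\<in>\<V>. x \<in> V} \<le> n + 1)"
    by (rule dim[unfolded cov_dim_le_def, THEN spec, THEN mp])
  then obtain \<V> where V: "finite \<V>" "\<forall>V\<in>\<V>. openin ?T V" "\<Union>\<V> = topspace ?T"
      "\<forall>V\<in>\<V>. \<exists>U\<in>\<U>. V \<subseteq> U" "\<forall>x\<in>topspace ?T. card {V\<in>\<V>. x \<in> V} \<le> n + 1"
    by (elim exE conjE) (rule that)
  have "\<forall>V\<in>\<V>. \<exists>c\<in>mspace m. V \<subseteq> mball_of m c r"
  proof
    fix V assume "V \<in> \<V>"
    then obtain U where "U \<in> \<U>" "V \<subseteq> U" using V(4) by blast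
    then obtain B where "B \<in> F" "V \<subseteq> B" unfolding \<U>_def by blast
    then obtain a where "a \<in> A" "V \<subseteq> mball_of m a r" using F(2) by blast
    then show "\<exists>c\<in>mspace m. V \<subseteq> mball_of m c r" using AM by blast
  qed
  then show ?thesis using that V(1,2,3,5) unfolding tA by blast
qed

lemma openin_subtopology_mball_of:
  assumes "openin (subtopology (mtopology_of m) A) V" and "a \<in> V"
  shows "\<exists>e>0. mball_of m a e \<inter> A \<subseteq> V"
proof -
  obtain G where G: "openin (mtopology_of m) G" "V = G \<inter> A"
    using assms(1) by (auto simp: openin_subtopology)
  obtain e where "e > 0" "mball_of m a e \<subseteq> G"
    using openin_mtopology_of_ball[OF G(1)] assms(2) G(2) by blast
  then show ?thesis using G(2) by blast
qed

text \<open>If the e-ball around a \<in> A meets A only inside V, then every nearest point of A to a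
  point x within e/2 of a lies in V: it is closer to x than a, hence within e of a.\<close>

lemma nearest_point_in_trace:
  assumes "a \<in> A" and AM: "A \<subseteq> mspace m" and trace: "mball_of m a e \<inter> A \<subseteq> V"
    and x: "x \<in> mball_of m a (e/2)"
    and a0: "a0 \<in> A" "\<forall>b\<in>A. mdist m x a0 \<le> mdist m x b"
  shows "a0 \<in> V"
proof (rule ccontr)
  assume "a0 \<notin> V"
  then have "a0 \<notin> mball_of m a e" using trace a0(1) by blast
  then have "e \<le> mdist m a a0" using x a0(1) AM by auto
  also have "\<dots> \<le> mdist m a x + mdist m x a0" using x a0(1) AM by (auto intro: mdist_triangle)
  also have "\<dots> \<le> 2 * mdist m a x" using a0(2) assms(1) by (simp add: mdist_commute)
  also have "\<dots> < e" using x by simp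
  finally show False by simp
qed

text \<open>Expansion of relatively open subsets V of a compact set A to open sets E V of M lying
  within \<delta> of V: each V is replaced by a union of balls around its points, so small that
  nearest points of A to points of E V lie in V. Hence all expansions containing a given
  point contain a common point of A, so expansion does not increase the order of a cover.\<close>

lemma nearest_point_expansion:
  assumes cA: "compactin (mtopology_of m) A"
    and rel: "\<forall>V\<in>\<V>. openin (subtopology (mtopology_of m) A) V" and \<delta>: "\<delta> > 0"
  obtains E where "\<forall>V\<in>\<V>. openin (mtopology_of m) (E V) \<and> V \<subseteq> E V"
    and "\<forall>V\<in>\<V>. \<forall>x\<in>E V. \<exists>a\<in>V. mdist m a x < \<delta>"
    and "\<forall>x\<in>mspace m. A \<noteq> {} \<longrightarrow> (\<exists>a\<in>A. \<forall>V\<in>\<V>. x \<in> E V \<longrightarrow> a \<in> V)"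
proof -
  have AM: "A \<subseteq> mspace m" using compactin_subset_topspace[OF cA] by simp
  have VA: "V \<subseteq> A" if "V \<in> \<V>" for V using rel that openin_subset by fastforce
  define e where "e V a = (SOME e. e > 0 \<and> mball_of m a e \<inter> A \<subseteq> V)" for V a
  have e: "e V a > 0 \<and> mball_of m a (e V a) \<inter> A \<subseteq> V" if Va: "V \<in> \<V>" "a \<in> V" for V a
  proof -
    have "\<exists>e>0. mball_of m a e \<inter> A \<subseteq> V"
      using rel Va by (intro openin_subtopology_mball_of) auto
    then show ?thesis unfolding e_def by (rule someI_ex)
  qed
  define E where "E V = (\<Union>a\<in>V. mball_of m a (min (e V a / 2) \<delta>))" for V
  show ?thesis
  proof (rule that)
    show "\<forall>V\<in>\<V>. openin (mtopology_of m) (E V) \<and> V \<subseteq> E V"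
    proof
      fix V assume V: "V \<in> \<V>"
      have "openin (mtopology_of m) (E V)" unfolding E_def by (intro openin_Union) (auto intro: openin_mball_of)
      moreover have "V \<subseteq> E V"
      proof
        fix a assume "a \<in> V"
        then have "a \<in> mball_of m a (min (e V a / 2) \<delta>)"
          using e[OF V] VA[OF V] AM \<delta> by (intro centre_in_mball_of) auto
        then show "a \<in> E V" using \<open>a \<in> V\<close> unfolding E_def by blast
      qed
      ultimately show "openin (mtopology_of m) (E V) \<and> V \<subseteq> E V" by blast
    qed
    show "\<forall>V\<in>\<V>. \<forall>x\<in>E V. \<exists>a\<in>V. mdist m a x < \<delta>"
      unfolding E_def by force
    show "\<forall>x\<in>mspace m. A \<noteq> {} \<longrightarrow> (\<exists>a\<in>A. \<forall>V\<in>\<V>. x \<in> E V \<longrightarrow> a \<in> V)"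
    proof (intro ballI impI)
      fix x assume "x \<in> mspace m" "A \<noteq> {}"
      then obtain a0 where a0: "a0 \<in> A" "\<forall>b\<in>A. mdist m x a0 \<le> mdist m x b"
        using nearest_point_of[OF cA] by metis
      have "a0 \<in> V" if V: "V \<in> \<V>" and "x \<in> E V" for V
      proof -
        obtain a where a: "a \<in> V" "x \<in> mball_of m a (min (e V a / 2) \<delta>)"
          using \<open>x \<in> E V\<close> unfolding E_def by blast
        then have "x \<in> mball_of m a (e V a / 2)" by simp
        then show ?thesis
          using nearest_point_in_trace[OF _ AM _ _ a0] VA[OF V] a(1) e[OF V a(1)] by blast
      qed
      then show "\<exists>a\<in>A. \<forall>V\<in>\<V>. x \<in> E V \<longrightarrow> a \<in> V" using a0(1) by blast
    qed
  qed
qed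

lemma fine_cover_if_cov_dim_le:
  assumes cA: "compactin (mtopology_of m) A"
    and dim: "cov_dim_le (subtopology (mtopology_of m) A) n" and r: "r > 0"
  shows "fine_cover m n r A"
proof -
  obtain \<V> where V: "finite \<V>" "\<forall>V\<in>\<V>. openin (subtopology (mtopology_of m) A) V" "\<Union>\<V> = A"
      "\<forall>V\<in>\<V>. \<exists>c\<in>mspace m. V \<subseteq> mball_of m c (r/2)" "\<forall>x\<in>A. card {V\<in>\<V>. x \<in> V} \<le> n + 1"
    using cov_dim_le_small_relative_cover[OF cA dim, of "r/2"] r by auto
  obtain E where E: "\<forall>V\<in>\<V>. openin (mtopology_of m) (E V) \<and> V \<subseteq> E V"
      "\<forall>V\<in>\<V>. \<forall>x\<in>E V. \<exists>a\<in>V. mdist m a x < r/2"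
      "\<forall>x\<in>mspace m. A \<noteq> {} \<longrightarrow> (\<exists>a\<in>A. \<forall>V\<in>\<V>. x \<in> E V \<longrightarrow> a \<in> V)"
    using nearest_point_expansion[OF cA V(2), of "r/2"] r by auto
  have small: "\<exists>c\<in>mspace m. E V \<subseteq> mball_of m c r" if V': "V \<in> \<V>" for V
  proof -
    obtain c where c: "c \<in> mspace m" "V \<subseteq> mball_of m c (r/2)" using V(4) V' by blast
    have "E V \<subseteq> mball_of m c r"
    proof
      fix x assume "x \<in> E V"
      then obtain a where a: "a \<in> V" "mdist m a x < r/2" using E(2) V' by blast
      have "x \<in> mspace m" using E(1) V' \<open>x \<in> E V\<close> openin_subset by fastforce
      moreover have "mdist m c a < r/2" "a \<in> mspace m" using c a(1) by auto
      ultimately show "x \<in> mball_of m c r"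
        using c(1) a(2) mdist_triangle[of c m a x] by simp
    qed
    then show ?thesis using c(1) by blast
  qed
  have order: "card {W\<in>E ` \<V>. x \<in> W} \<le> n + 1" if x: "x \<in> mspace m" for x
  proof (cases "{V\<in>\<V>. x \<in> E V} = {}")
    case True
    then have "{W\<in>E ` \<V>. x \<in> W} = {}" by blast
    then show ?thesis by (simp only: card.empty)
  next
    case False
    then obtain V a where "V \<in> \<V>" "a \<in> V" using E(2) by blast
    then have "A \<noteq> {}" using V(3) by blast
    then obtain a0 where a0: "a0 \<in> A" "\<forall>V\<in>\<V>. x \<in> E V \<longrightarrow> a0 \<in> V" using E(3) x by blast
    have "card {W\<in>E ` \<V>. x \<in> W} \<le> card {V\<in>\<V>. x \<in> E V}"
      using V(1) by (rule card_members_image_le)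
    also have "\<dots> \<le> card {V\<in>\<V>. a0 \<in> V}" using V(1) a0(2) by (intro card_mono) auto
    also have "\<dots> \<le> n + 1" using V(5) a0(1) by blast
    finally show ?thesis .
  qed
  show ?thesis
    unfolding fine_cover_def
  proof (intro exI conjI ballI)
    show "finite (E ` \<V>)" using V(1) by simp
    show "A \<subseteq> \<Union>(E ` \<V>)" using V(3) E(1) by blast
  qed (use E(1) small order in auto)
qed

lemma compact_cov_dim_le_iff_fine_covers:
  assumes "compactin (mtopology_of m) A"
  shows "cov_dim_le (subtopology (mtopology_of m) A) n \<longleftrightarrow> (\<forall>k. fine_cover m n (1 / Suc k) A)"
proof
  assume "cov_dim_le (subtopology (mtopology_of m) A) n"
  then show "\<forall>k. fine_cover m n (1 / Suc k) A"
    using fine_cover_if_cov_dim_le[OF assms] by simp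
next
  assume fine: "\<forall>k. fine_cover m n (1 / Suc k) A"
  show "cov_dim_le (subtopology (mtopology_of m) A) n"
  proof (rule cov_dim_le_if_fine_covers[OF assms])
    fix r :: real assume "r > 0"
    then obtain k where "1 / Suc k < r" using nat_approx_posE by blast
    then show "fine_cover m n r A" using fine fine_cover_mono by (meson less_imp_le)
  qed
qed

subsection \<open>Openness of the sets of fine maps\<close>

lemma openin_source_limitation_topology:
  "openin (source_limitation_topology X m) U \<longleftrightarrow>
     U \<subseteq> cmaps X m \<and> (\<forall>g\<in>U. \<exists>\<epsilon>. admissible_eps X \<epsilon> \<and> sl_ball X m g \<epsilon> \<subseteq> U)"
proof -
  have "istopology (\<lambda>U. U \<subseteq> cmaps X m \<and> (\<forall>g\<in>U. \<exists>\<epsilon>. admissible_eps X \<epsilon> \<and> sl_ball X m g \<epsilon> \<subseteq> U))"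
    unfolding istopology_def
  proof (rule conjI; intro allI impI)
    fix S T
    assume S: "S \<subseteq> cmaps X m \<and> (\<forall>g\<in>S. \<exists>\<epsilon>. admissible_eps X \<epsilon> \<and> sl_ball X m g \<epsilon> \<subseteq> S)"
       and T: "T \<subseteq> cmaps X m \<and> (\<forall>g\<in>T. \<exists>\<epsilon>. admissible_eps X \<epsilon> \<and> sl_ball X m g \<epsilon> \<subseteq> T)"
    show "S \<inter> T \<subseteq> cmaps X m \<and> (\<forall>g\<in>S \<inter> T. \<exists>\<epsilon>. admissible_eps X \<epsilon> \<and> sl_ball X m g \<epsilon> \<subseteq> S \<inter> T)"
    proof (intro conjI ballI)
      show "S \<inter> T \<subseteq> cmaps X m" using S by blast
      fix g assume g: "g \<in> S \<inter> T"
      obtain e1 where e1: "admissible_eps X e1" "sl_ball X m g e1 \<subseteq> S" using S g by blast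
      obtain e2 where e2: "admissible_eps X e2" "sl_ball X m g e2 \<subseteq> T" using T g by blast
      have "admissible_eps X (\<lambda>x. min (e1 x) (e2 x))"
        using e1(1) e2(1) unfolding admissible_eps_def by (auto intro: continuous_map_real_min)
      moreover have "sl_ball X m g (\<lambda>x. min (e1 x) (e2 x)) \<subseteq> sl_ball X m g e1 \<inter> sl_ball X m g e2"
        unfolding sl_ball_def by fastforce
      ultimately show "\<exists>\<epsilon>. admissible_eps X \<epsilon> \<and> sl_ball X m g \<epsilon> \<subseteq> S \<inter> T"
        using e1(2) e2(2) by blast
    qed
  next
    fix \<K> :: "('a \<Rightarrow> 'b) set set"
    assume "\<forall>K\<in>\<K>. K \<subseteq> cmaps X m \<and> (\<forall>g\<in>K. \<exists>\<epsilon>. admissible_eps X \<epsilon> \<and> sl_ball X m g \<epsilon> \<subseteq> K)"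
    then show "\<Union>\<K> \<subseteq> cmaps X m \<and> (\<forall>g\<in>\<Union>\<K>. \<exists>\<epsilon>. admissible_eps X \<epsilon> \<and> sl_ball X m g \<epsilon> \<subseteq> \<Union>\<K>)"
      by (meson Sup_upper UnionE order_trans Sup_least)
  qed
  then show ?thesis
    unfolding source_limitation_topology_def by (simp add: topology_inverse')
qed

lemma compactin_image_fibre:
  assumes "proper_map X Y f" and "y \<in> topspace Y" and "continuous_map X (mtopology_of m) g"
  shows "compactin (mtopology_of m) (g ` fibre X f y)"
proof -
  have "compactin X (fibre X f y)"
    using assms(1,2) unfolding proper_map_def fibre_def by blast
  then show ?thesis using assms(3) by (rule image_compactin)
qed

lemma closed_map_tube:
  assumes "closed_map X Y f" and "openin X N" and "y \<in> topspace Y" and "fibre X f y \<subseteq> N"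
  obtains V where "openin Y V" and "y \<in> V" and "\<forall>y'\<in>V. fibre X f y' \<subseteq> N"
proof -
  have "\<forall>U y. openin X U \<and> y \<in> topspace Y \<and> {x \<in> topspace X. f x = y} \<subseteq> U
          \<longrightarrow> (\<exists>V. openin Y V \<and> y \<in> V \<and> {x \<in> topspace X. f x \<in> V} \<subseteq> U)"
    using assms(1) unfolding closed_map_fibre_neighbourhood by (rule conjunct2)
  then obtain V where "openin Y V" "y \<in> V" "{x \<in> topspace X. f x \<in> V} \<subseteq> N"
    using assms(2-4) unfolding fibre_def by (elim allE[of _ N] allE[of _ y]) blast
  then show ?thesis using that unfolding fibre_def by blast
qed

lemma uniform_neighbourhood_closed_compact:
  assumes K: "compactin (mtopology_of m) K" and Z: "closedin (mtopology_of m) Z"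
    and G: "openin (mtopology_of m) G" and KZ: "K \<inter> Z \<subseteq> G"
  obtains \<epsilon> where "\<epsilon> > 0" and "\<forall>p\<in>K. \<forall>z\<in>Z. mdist m p z < \<epsilon> \<longrightarrow> z \<in> G"
proof -
  have "openin (mtopology_of m) (mspace m - Z)"
    using Z by (simp add: closedin_def)
  moreover have "K \<subseteq> \<Union>{G, mspace m - Z}"
    using KZ compactin_subset_topspace[OF K] by auto
  ultimately obtain \<epsilon> where \<epsilon>: "\<epsilon> > 0" "\<forall>p\<in>K. \<exists>C\<in>{G, mspace m - Z}. mball_of m p \<epsilon> \<subseteq> C"
    using lebesgue_number_of[OF K, of "{G, mspace m - Z}"] G by blast
  have "z \<in> G" if "p \<in> K" "z \<in> Z" "mdist m p z < \<epsilon>" for p z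
  proof -
    have "p \<in> mspace m" "z \<in> mspace m"
      using that compactin_subset_topspace[OF K] closedin_subset[OF Z] by auto
    then have "z \<in> mball_of m p \<epsilon>" using that(3) by simp
    then show ?thesis using \<epsilon>(2) that(1,2) by blast
  qed
  then show ?thesis using that \<epsilon>(1) by blast
qed

text \<open>The
  neighbourhood of y is a tube around the fibre, which exists since f is a closed map.\<close>

lemma fine_cover_perturbation:
  assumes perf: "perfect_map X Y f" and Zc: "closedin (mtopology_of m) Z"
    and g: "continuous_map X (mtopology_of m) g" and y: "y \<in> topspace Y"
    and fine: "fine_cover m n r (g ` fibre X f y \<inter> Z)"
  shows "\<exists>\<delta>>0. \<exists>V. openin Y V \<and> y \<in> V \<and> (\<forall>y'\<in>V. \<forall>h.
           (\<forall>x\<in>fibre X f y'. h x \<in> mspace m \<and> mdist m (h x) (g x) < \<delta>)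
           \<longrightarrow> fine_cover m n r (h ` fibre X f y' \<inter> Z))"
proof -
  obtain \<W> where W: "finite \<W>" "\<forall>W\<in>\<W>. openin (mtopology_of m) W \<and> (\<exists>c\<in>mspace m. W \<subseteq> mball_of m c r)"
      "g ` fibre X f y \<inter> Z \<subseteq> \<Union>\<W>" "\<forall>x\<in>mspace m. card {W\<in>\<W>. x \<in> W} \<le> n + 1"
    using fine unfolding fine_cover_def by (elim exE conjE) (rule that)
  have proper: "proper_map X Y f" using perf by (simp add: perfect_map_def)
  have gM: "g x \<in> mspace m" if "x \<in> topspace X" for x
    using g that unfolding continuous_map_def by auto
  have "openin (mtopology_of m) (\<Union>\<W>)" using W(2) by blast
  then obtain \<epsilon> where \<epsilon>: "\<epsilon> > 0" "\<forall>p\<in>g ` fibre X f y. \<forall>z\<in>Z. mdist m p z < \<epsilon> \<longrightarrow> z \<in> \<Union>\<W>"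
    by (rule uniform_neighbourhood_closed_compact[OF compactin_image_fibre[OF proper y g] Zc _ W(3)])
  define N where "N = {x \<in> topspace X. g x \<in> (\<Union>p\<in>fibre X f y. mball_of m (g p) (\<epsilon>/2))}"
  have N_open: "openin X N"
    unfolding N_def by (intro openin_continuous_map_preimage[OF g] openin_Union) (auto intro: openin_mball_of)
  have "fibre X f y \<subseteq> N"
  proof
    fix x assume x: "x \<in> fibre X f y"
    then have "g x \<in> mball_of m (g x) (\<epsilon>/2)" using gM \<epsilon>(1) by (intro centre_in_mball_of) (auto simp: fibre_def)
    then show "x \<in> N" using x unfolding N_def fibre_def by blast
  qed
  then obtain V where V: "openin Y V" "y \<in> V" "\<forall>y'\<in>V. fibre X f y' \<subseteq> N"
    by (rule closed_map_tube[OF proper_imp_closed_map[OF proper] N_open y])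
  have "fine_cover m n r (h ` fibre X f y' \<inter> Z)"
    if y': "y' \<in> V" and h: "\<forall>x\<in>fibre X f y'. h x \<in> mspace m \<and> mdist m (h x) (g x) < \<epsilon>/2" for y' h
  proof -
    have "z \<in> \<Union>\<W>" if z: "z \<in> h ` fibre X f y' \<inter> Z" for z
    proof -
      obtain x where x: "x \<in> fibre X f y'" "z = h x" "z \<in> Z" using z by blast
      then have "x \<in> N" using V(3) y' by blast
      then obtain p where p: "p \<in> fibre X f y" "mdist m (g p) (g x) < \<epsilon>/2"
        unfolding N_def by auto
      have "x \<in> topspace X" "p \<in> topspace X" using x(1) p(1) unfolding fibre_def by auto
      then have "mdist m (g p) z \<le> mdist m (g p) (g x) + mdist m (g x) z"
        using gM h x(1,2) by (intro mdist_triangle) auto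
      also have "\<dots> < \<epsilon>"
        using p(2) h x(1,2) mdist_commute[of m "g x" "h x"] by fastforce
      finally show ?thesis using \<epsilon>(2) p(1) x(3) by blast
    qed
    then show ?thesis unfolding fine_cover_def using W(1,2,4) by blast
  qed
  then show ?thesis using \<epsilon>(1) V(1,2) by (intro exI[of _ "\<epsilon>/2"]) auto
qed

definition fine_maps :: "'a topology \<Rightarrow> 'm metric \<Rightarrow> ('a \<Rightarrow> 'b) \<Rightarrow> nat \<Rightarrow> 'b set \<Rightarrow> 'm set \<Rightarrow> real
    \<Rightarrow> ('a \<Rightarrow> 'm) set" where
  "fine_maps X m f n H Z r = {g \<in> cmaps X m. \<forall>y\<in>H. fine_cover m n r (g ` fibre X f y \<inter> Z)}"

text \<open>Each set of fine maps is open in the source limitation topology: around g take the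
  local tolerances of the previous lemma and glue them to \<epsilon> = \<phi> \<circ> f with \<phi> from
  paracompactness of Y.\<close>

lemma openin_fine_maps:
  assumes perf: "perfect_map X Y f" and PY: "paracompact_space Y"
    and Zc: "closedin (mtopology_of m) Z" and Hc: "closedin Y H"
  shows "openin (source_limitation_topology X m) (fine_maps X m f n H Z r)"
  unfolding openin_source_limitation_topology
proof (intro conjI ballI)
  show "fine_maps X m f n H Z r \<subseteq> cmaps X m" by (auto simp: fine_maps_def)
  fix g assume g: "g \<in> fine_maps X m f n H Z r"
  then have gc: "continuous_map X (mtopology_of m) g" by (simp add: fine_maps_def cmaps_def)
  have HY: "H \<subseteq> topspace Y" using Hc closedin_subset by blast
  have "\<forall>y\<in>H. \<exists>\<delta>>0. \<exists>V. openin Y V \<and> y \<in> V \<and> (\<forall>y'\<in>V. \<forall>h.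
           (\<forall>x\<in>fibre X f y'. h x \<in> mspace m \<and> mdist m (h x) (g x) < \<delta>)
           \<longrightarrow> fine_cover m n r (h ` fibre X f y' \<inter> Z))"
    using g HY fine_cover_perturbation[OF perf Zc gc] unfolding fine_maps_def by blast
  then obtain \<delta> where "\<forall>y\<in>H. \<delta> y > 0 \<and> (\<exists>V. openin Y V \<and> y \<in> V \<and> (\<forall>y'\<in>V. \<forall>h.
           (\<forall>x\<in>fibre X f y'. h x \<in> mspace m \<and> mdist m (h x) (g x) < \<delta> y)
           \<longrightarrow> fine_cover m n r (h ` fibre X f y' \<inter> Z)))"
    by (rule bchoice[THEN exE])
  then obtain V where local: "\<forall>y\<in>H. \<delta> y > 0 \<and> openin Y (V y) \<and> y \<in> V y \<and> (\<forall>y'\<in>V y. \<forall>h.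
           (\<forall>x\<in>fibre X f y'. h x \<in> mspace m \<and> mdist m (h x) (g x) < \<delta> y)
           \<longrightarrow> fine_cover m n r (h ` fibre X f y' \<inter> Z))"
    by (metis (no_types, lifting) bchoice)
  then have "\<forall>y\<in>H. \<delta> y > 0 \<and> openin Y (V y) \<and> y \<in> V y" by blast
  then obtain \<phi> where \<phi>: "continuous_map Y euclideanreal \<phi>" "\<forall>y\<in>topspace Y. 0 < \<phi> y \<and> \<phi> y \<le> 1"
      "\<forall>y'\<in>H. \<exists>y\<in>H. y' \<in> V y \<and> \<phi> y' \<le> \<delta> y"
    by (rule paracompact_tolerance_on_closed[OF PY Hc])
  have fc: "continuous_map X Y f" using perf by (simp add: perfect_map_def)
  then have fY: "f x \<in> topspace Y" if "x \<in> topspace X" for x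
    using that unfolding continuous_map_def by auto
  show "\<exists>\<epsilon>. admissible_eps X \<epsilon> \<and> sl_ball X m g \<epsilon> \<subseteq> fine_maps X m f n H Z r"
  proof (intro exI conjI)
    show "admissible_eps X (\<phi> \<circ> f)"
      unfolding admissible_eps_def
      using continuous_map_compose[OF fc \<phi>(1)] \<phi>(2) fY by auto
    show "sl_ball X m g (\<phi> \<circ> f) \<subseteq> fine_maps X m f n H Z r"
    proof
      fix h assume h: "h \<in> sl_ball X m g (\<phi> \<circ> f)"
      have "fine_cover m n r (h ` fibre X f y' \<inter> Z)" if y': "y' \<in> H" for y'
      proof -
        obtain y where y: "y \<in> H" "y' \<in> V y" "\<phi> y' \<le> \<delta> y" using \<phi>(3) y' by blast
        have "h x \<in> mspace m \<and> mdist m (h x) (g x) < \<delta> y" if "x \<in> fibre X f y'" for x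
          using h that y(3) unfolding sl_ball_def cmaps_def fibre_def continuous_map_def
          by fastforce
        then show ?thesis using local y(1,2) by blast
      qed
      then show "h \<in> fine_maps X m f n H Z r"
        using h unfolding fine_maps_def sl_ball_def by blast
    qed
  qed
qed

theorem proposition2p4:
  fixes X :: "'a topology" and Y :: "'b topology" and m :: "'m metric"
    and f :: "'a \<Rightarrow> 'b" and n :: nat and Z :: "'m set" and H :: "'b set"
  assumes "mcomplete_of m"
    and "closedin (mtopology_of m) Z"
    and "perfect_map X Y f"
    and "paracompact_space X" and "paracompact_space Y"
    and "map_dim_le X Y f n"
    and "closedin Y H"
    and "(metrizable_space X \<and> metrizable_space Y) \<or> Z = mspace m"
  shows "gdelta_in (source_limitation_topology X m) (Rnf X m f n H Z)"
proof -
  define G where "G k = fine_maps X m f n H Z (1 / Suc k)" for k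
  have G_open: "openin (source_limitation_topology X m) (G k)" for k
    unfolding G_def using assms(3,5,2,7) by (rule openin_fine_maps)
  have proper: "proper_map X Y f" using assms(3) by (simp add: perfect_map_def)
  have compact: "compactin (mtopology_of m) (g ` fibre X f y \<inter> Z)" if "g \<in> cmaps X m" "y \<in> H" for g y
  proof -
    have "y \<in> topspace Y" using that(2) assms(7) closedin_subset by blast
    moreover have "continuous_map X (mtopology_of m) g" using that(1) by (simp add: cmaps_def)
    ultimately have "compactin (mtopology_of m) (Z \<inter> g ` fibre X f y)"
      by (intro closed_Int_compactin[OF assms(2)] compactin_image_fibre[OF proper])
    then show ?thesis by (simp only: Int_commute)
  qed
  have "Rnf X m f n H Z = \<Inter>(range G)"
    using compact_cov_dim_le_iff_fine_covers[OF compact]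
    unfolding Rnf_def G_def fine_maps_def by auto
  moreover have "gdelta_in (source_limitation_topology X m) (\<Inter>(range G))"
    by (rule gdelta_in_Inter) (auto intro: open_imp_gdelta_in G_open)
  ultimately show ?thesis by simp
qed

end
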